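(* Let $\mathcal A\subseteq E^\infty$, let $V\subseteq E$ be a block subspace, $\vec v$ a finite block sequence and $T$ a $(V,\vec v)$-rule. Then there is a block subspace $X\subseteq V$ such that for every $\vec x\in T$: if there exists a block subspace $Y\subseteq X$ such that player I has a strategy in $B^T_Y(\vec x)$ to play in $\mathcal A$, then for every block subspace $Y\subseteq X$, player I has a strategy in $B^T_Y(\vec x)$ to play in $\mathcal A$.
   Context: Fix a countable field $\mathfrak F$ and let $E$ be the countable-dimensional $\mathfrak F$-vector space with basis $(e_n)$. For non-zero $x=\sum a_ne_n$, ${\rm supp}\,x=\{n:a_n\neq0\}$. A block sequence is a sequence of non-zero vectors with $\max{\rm supp}\,x_n<\min{\rm supp}\,x_{n+1}$. "Subspace" means an infinite-dimensional block subspace of $E$. For a subspace $X$, $X[k]=\{x\in X\setminus\{0\}:k<\min{\rm supp}\,x\}$. $E^\infty=E^{\mathbb N}$ with the product of discrete topologies; $E^{<\infty}$ is the set of finite block sequences; $\hat{}$ is concatenation; $T_{\vec x}=\{\vec y:\vec x\,\hat{}\,\vec y\in T\}$. Game $B_V(\vec v)$: if $|\vec v|$ is even: II plays a subspace $Z_0\subseteq V$; I plays non-zero $x_0\in Z_0$ and $n_0\in\mathbb N$; II plays non-zero $y_0\in V[n_0]$ and a subspace $Z_1\subseteq V$; I plays $x_1\in Z_1$, $n_1$; II plays $y_1\in V[n_1]$, $Z_2$; etc.; outcome $\vec v\,\hat{}\,(x_0,y_0,x_1,y_1,\dots)$. If $|\vec v|$ is odd: I plays $n_0$; II plays $y_0\in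 V[n_0]$ and $Z_0\subseteq V$; I plays $x_0\in Z_0$ and $n_1$; II plays $y_1\in V[n_1]$ and $Z_1$; etc.; outcome $\vec v\,\hat{}\,(y_0,x_0,y_1,x_1,\dots)$. A $(V,\vec v)$-rule is a set $T\subseteq E^{<\infty}$ with $\vec v\in T$ such that: (i) if $\vec y\in T$, $|\vec y|$ odd, then for every subspace $Z\subseteq V$ there is $z\in Z$ with $\vec y\,\hat{}\,z\in T$; (ii) if $\vec y\in T$, $|\vec y|$ even, then there is $n$ with $\vec y\,\hat{}\,z\in T$ for all $z\in V[n]$. The $T$-induced subgame $B^T_V(\vec v)$ is played as $B_V(\vec v)$ with the additional requirement that every position, i.e. the finite sequence of vectors played so far listed in the order they appear in the outcome, belongs to $T_{\vec v}$. A strategy to play in $\mathcal A$ is one all of whose outcomes lie in $\mathcal A$. *)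

theory Defs
  imports Main "HOL-Library.Countable" "HOL-Library.Function_Algebras"
begin

text \<open>Vectors of E are finitely supported functions nat => F (coordinates w.r.t. the
basis (e_n)). Sequences in E^infinity are functions nat => vector.\<close>

type_synonym 'f vec = "nat \<Rightarrow> 'f"

definition supp :: "('f::zero) vec \<Rightarrow> nat set" where
  "supp x = {n. x n \<noteq> 0}"

definition in_E :: "('f::zero) vec \<Rightarrow> bool" where
  "in_E x \<longleftrightarrow> finite (supp x)"

definition block_seq :: "(nat \<Rightarrow> ('f::zero) vec) \<Rightarrow> bool" where
  "block_seq b \<longleftrightarrow> (\<forall>n. in_E (b n) \<and> b n \<noteq> 0 \<and>
                          Max (supp (b n)) < Min (supp (b (Suc n))))"

definition fin_block :: "('f::zero) vec list \<Rightarrow> bool" where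
  "fin_block xs \<longleftrightarrow> (\<forall>x\<in>set xs. in_E x \<and> x \<noteq> 0) \<and>
     (\<forall>i. Suc i < length xs \<longrightarrow> Max (supp (xs ! i)) < Min (supp (xs ! Suc i)))"

definition seq_span :: "(nat \<Rightarrow> ('f::comm_ring_1) vec) \<Rightarrow> 'f vec set" where
  "seq_span b = {x. \<exists>n c. x = (\<lambda>k. \<Sum>i<n. c i * b i k)}"

definition block_subspace :: "('f::comm_ring_1) vec set \<Rightarrow> bool" where
  "block_subspace X \<longleftrightarrow> (\<exists>b. block_seq b \<and> X = seq_span b)"

definition tail_sp :: "('f::zero) vec set \<Rightarrow> nat \<Rightarrow> 'f vec set" where
  "tail_sp X k = {x\<in>X. x \<noteq> 0 \<and> k < Min (supp x)}"

definition is_rule :: "('f::comm_ring_1) vec set \<Rightarrow> 'f vec list \<Rightarrow> 'f vec list set \<Rightarrow> bool" where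
  "is_rule V v T \<longleftrightarrow> T \<subseteq> {xs. fin_block xs} \<and> v \<in> T \<and>
     (\<forall>y\<in>T. odd (length y) \<longrightarrow>
        (\<forall>Z. block_subspace Z \<and> Z \<subseteq> V \<longrightarrow> (\<exists>z\<in>Z. y @ [z] \<in> T))) \<and>
     (\<forall>y\<in>T. even (length y) \<longrightarrow> (\<exists>n. \<forall>z\<in>tail_sp V n. y @ [z] \<in> T))"

text \<open>A strategy for I is a map sigma from the list of II's moves so far
to I's next move (x, n) (in the odd case I's first move only uses n).  A move of II is a
pair (y, Z) (in the even case II's first move only uses Z).  tau ranges over all
infinite sequences of II-moves.\<close>

definition I_move :: "'f vec list \<Rightarrow> (('f vec \<times> 'f vec set) list \<Rightarrow> 'f vec \<times> nat)
    \<Rightarrow> (nat \<Rightarrow> 'f vec \<times> 'f vec set) \<Rightarrow> nat \<Rightarrow> 'f vec \<times> nat" where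
  "I_move v \<sigma> \<tau> k = \<sigma> (map \<tau> [0..<(if even (length v) then Suc k else k)])"

text \<open>Outcome: v followed by x0,y0,x1,y1,... (even case) or y0,x0,y1,x1,... (odd case).\<close>
definition outcome :: "'f vec list \<Rightarrow> (('f vec \<times> 'f vec set) list \<Rightarrow> 'f vec \<times> nat)
    \<Rightarrow> (nat \<Rightarrow> 'f vec \<times> 'f vec set) \<Rightarrow> nat \<Rightarrow> 'f vec" where
  "outcome v \<sigma> \<tau> j =
     (if j < length v then v ! j
      else (let i = j - length v; k = i div 2 in
        if even (length v)
        then (if even i then fst (I_move v \<sigma> \<tau> k) else fst (\<tau> (Suc k)))
        else (if even i then fst (\<tau> k) else fst (I_move v \<sigma> \<tau> (Suc k)))))"

definition position :: "'f vec list \<Rightarrow> (('f vec \<times> 'f vec set) list \<Rightarrow> 'f vec \<times> nat)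
    \<Rightarrow> (nat \<Rightarrow> 'f vec \<times> 'f vec set) \<Rightarrow> nat \<Rightarrow> 'f vec list" where
  "position v \<sigma> \<tau> m = map (outcome v \<sigma> \<tau>) [0..<m]"

definition II_legal :: "('f::comm_ring_1) vec list set \<Rightarrow> 'f vec set \<Rightarrow> 'f vec list
    \<Rightarrow> (('f vec \<times> 'f vec set) list \<Rightarrow> 'f vec \<times> nat)
    \<Rightarrow> (nat \<Rightarrow> 'f vec \<times> 'f vec set) \<Rightarrow> nat \<Rightarrow> bool" where
  "II_legal T W v \<sigma> \<tau> k \<longleftrightarrow>
     block_subspace (snd (\<tau> k)) \<and> snd (\<tau> k) \<subseteq> W \<and>
     (if even (length v)
      then (0 < k \<longrightarrow> fst (\<tau> k) \<in> tail_sp W (snd (I_move v \<sigma> \<tau> (k - 1))) \<and>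
                        position v \<sigma> \<tau> (length v + 2 * k) \<in> T)
      else (fst (\<tau> k) \<in> tail_sp W (snd (I_move v \<sigma> \<tau> k)) \<and>
            position v \<sigma> \<tau> (length v + 2 * k + 1) \<in> T))"

definition I_legal :: "('f::comm_ring_1) vec list set \<Rightarrow> 'f vec list
    \<Rightarrow> (('f vec \<times> 'f vec set) list \<Rightarrow> 'f vec \<times> nat)
    \<Rightarrow> (nat \<Rightarrow> 'f vec \<times> 'f vec set) \<Rightarrow> nat \<Rightarrow> bool" where
  "I_legal T v \<sigma> \<tau> k \<longleftrightarrow>
     (if even (length v)
      then fst (I_move v \<sigma> \<tau> k) \<in> snd (\<tau> k) \<and> fst (I_move v \<sigma> \<tau> k) \<noteq> 0 \<and>
           position v \<sigma> \<tau> (length v + 2 * k + 1) \<in> T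
      else (0 < k \<longrightarrow> fst (I_move v \<sigma> \<tau> k) \<in> snd (\<tau> (k - 1)) \<and>
                      fst (I_move v \<sigma> \<tau> k) \<noteq> 0 \<and>
                      position v \<sigma> \<tau> (length v + 2 * k) \<in> T))"

text \<open>Player I has a strategy in B^T_W(v) to play in A: a strategy sigma such that against
every sequence of II-moves, I's moves are legal as long as II's previous moves were legal,
and every play in which all of II's moves are legal has outcome in A.  (Positions lie in
T_v iff v followed by them lies in T, which is what is checked.)\<close>
definition I_has_strategy :: "('f::comm_ring_1) vec list set \<Rightarrow> 'f vec set \<Rightarrow> 'f vec list
    \<Rightarrow> (nat \<Rightarrow> 'f vec) set \<Rightarrow> bool" where
  "I_has_strategy T W v A \<longleftrightarrow>
     (\<exists>\<sigma>. \<forall>\<tau>.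
        (\<forall>k. (\<forall>j < (if even (length v) then Suc k else k). II_legal T W v \<sigma> \<tau> j)
              \<longrightarrow> I_legal T v \<sigma> \<tau> k) \<and>
        ((\<forall>k. II_legal T W v \<sigma> \<tau> k) \<longrightarrow> outcome v \<sigma> \<tau> \<in> A))"

end

theory Submission
  imports Defs "HOL-Library.Countable_Set"
begin

(* Proof idea: a fusion (diagonal) argument over the countably many positions of T.
   Enumerate T as e 0, e 1, ...  Starting from a block basis B 0 of V, build block
   sequences B 0, B 1, ... with decreasing spans, where span (B (i+1)) is a block subspace
   of span (B i) in which I wins B^T(e i), whenever such a subspace exists.  The diagonal
   sequence, whose i-th vector is taken from B i to the right of the previous one, spans
   the required X; X lies in every span (B i) beyond some coordinate.  The game enters
   through one transfer principle: a strategy for I in W' yields one in any W that lies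
   in W' beyond some coordinate N (I raises its n to at least N and replaces II's
   subspaces by block subspaces inside W').  So if I wins in some Y within X at e i, it
   wins in a block subspace of span (B i), hence in span (B (i+1)), hence in every Y' within X. *)

section \<open>Supports and block sequences\<close>

lemma supp_nonempty: "x \<noteq> 0 \<Longrightarrow> supp x \<noteq> {}"
  by (auto simp: supp_def)

lemma vanishes_below_Min_supp: "finite (supp x) \<Longrightarrow> k < Min (supp x) \<Longrightarrow> x k = 0"
  using Min_le by (fastforce simp: supp_def)

lemma vanishes_above_Max_supp: "finite (supp x) \<Longrightarrow> Max (supp x) < k \<Longrightarrow> x k = 0"
  using Max_ge by (fastforce simp: supp_def)

lemma block_seq_supp:
  "block_seq b \<Longrightarrow> finite (supp (b n)) \<and> supp (b n) \<noteq> {} \<and> Max (supp (b n)) < Min (supp (b (Suc n)))"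
  unfolding block_seq_def in_E_def using supp_nonempty by blast

lemma block_seq_Min_le_Max: "block_seq b \<Longrightarrow> Min (supp (b n)) \<le> Max (supp (b n))"
  using block_seq_supp[of b n] by (simp add: Min_le_iff)

lemma block_seq_separated: "block_seq b \<Longrightarrow> j < j' \<Longrightarrow> Max (supp (b j)) < Min (supp (b j'))"
proof (induction j')
  case (Suc j')
  then show ?case using block_seq_supp[of b j'] block_seq_Min_le_Max[of b j']
    by (metis le_less_trans less_Suc_eq order_less_trans)
qed simp

lemma block_seq_Min_mono: "block_seq b \<Longrightarrow> j \<le> j' \<Longrightarrow> Min (supp (b j)) \<le> Min (supp (b j'))"
  using block_seq_separated[of b j j'] block_seq_Min_le_Max[of b j]
  by (cases "j = j'") auto

lemma block_seq_index_le_Min: "block_seq b \<Longrightarrow> n \<le> Min (supp (b n))"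
proof (induction n)
  case (Suc n)
  then show ?case using block_seq_supp[of b n] block_seq_Min_le_Max[of b n] by linarith
qed simp

lemma block_seq_shift: "block_seq b \<Longrightarrow> block_seq (\<lambda>j. b (j + m))"
  unfolding block_seq_def by simp

section \<open>The span of a sequence\<close>

lemma span_zero: "(\<lambda>k. 0) \<in> seq_span b"
  unfolding seq_span_def by (rule CollectI, rule exI[of _ 0]) simp

lemma span_generator: "b j \<in> seq_span (b :: nat \<Rightarrow> ('f::comm_ring_1) vec)"
  unfolding seq_span_def
proof (rule CollectI, intro exI)
  show "b j = (\<lambda>k. \<Sum>i<Suc j. (if i = j then 1 else 0) * b i k)"
    by (simp add: if_distrib)
qed

lemma span_add:
  assumes "x \<in> seq_span b" "y \<in> seq_span b"
  shows "(\<lambda>k. x k + y k) \<in> seq_span b"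
proof -
  obtain n c where x: "x = (\<lambda>k. \<Sum>i<n. c i * b i k)" using assms(1) unfolding seq_span_def by blast
  obtain m d where y: "y = (\<lambda>k. \<Sum>i<m. d i * b i k)" using assms(2) unfolding seq_span_def by blast
  define c' where "c' i = (if i < n then c i else 0)" for i
  define d' where "d' i = (if i < m then d i else 0)" for i
  have padded: "(\<Sum>i<n + m. (if i < l then f i else 0) * b i k) = (\<Sum>i<l. f i * b i k)"
    if "l \<le> n + m" for l f k
    using that by (intro sum.mono_neutral_cong_right) auto
  have "x k + y k = (\<Sum>i<n + m. (c' i + d' i) * b i k)" for k
    unfolding distrib_right sum.distrib c'_def d'_def by (simp add: padded x y)
  then show ?thesis unfolding seq_span_def by (intro CollectI exI[of _ "n + m"] exI[of _ "\<lambda>i. c' i + d' i"]) blast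
qed

lemma span_scale:
  assumes "x \<in> seq_span b" shows "(\<lambda>k. a * x k) \<in> seq_span b"
proof -
  obtain n c where x: "x = (\<lambda>k. \<Sum>i<n. c i * b i k)" using assms unfolding seq_span_def by blast
  have "(\<lambda>k. a * x k) = (\<lambda>k. \<Sum>i<n. (a * c i) * b i k)"
    unfolding x by (simp add: sum_distrib_left mult.assoc)
  then show ?thesis unfolding seq_span_def by (intro CollectI exI[of _ n] exI[of _ "\<lambda>i. a * c i"])
qed

lemma span_subset: assumes "\<And>j. c j \<in> seq_span d" shows "seq_span c \<subseteq> seq_span d"
proof
  fix x assume "x \<in> seq_span c"
  then obtain n a where x: "x = (\<lambda>k. \<Sum>i<n. a i * c i k)" unfolding seq_span_def by blast
  have "(\<lambda>k. \<Sum>i<n. a i * c i k) \<in> seq_span d"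
  proof (induction n)
    case (Suc n)
    show ?case using span_add[OF Suc span_scale[OF assms]] by simp
  qed (simp add: span_zero)
  then show "x \<in> seq_span d" using x by simp
qed

lemma span_of_block_seq_finite_supp:
  assumes "block_seq b" "x \<in> seq_span b" shows "finite (supp x)"
proof -
  obtain n c where x: "x = (\<lambda>k. \<Sum>i<n. c i * b i k)" using assms(2) unfolding seq_span_def by blast
  have "supp x \<subseteq> (\<Union>i<n. supp (b i))"
  proof
    fix k assume "k \<in> supp x"
    then have "(\<Sum>i<n. c i * b i k) \<noteq> 0" by (simp add: supp_def x)
    then obtain i where "i < n" "c i * b i k \<noteq> 0" by (meson lessThan_iff sum.neutral)
    then show "k \<in> (\<Union>i<n. supp (b i))" by (intro UN_I[of i]) (auto simp: supp_def)
  qed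
  then show ?thesis using block_seq_supp[OF assms(1)] by (meson finite_UN_I finite_lessThan finite_subset)
qed

text \<open>A vector of span b that vanishes to the left of b i only uses b i, b (i+1), ...
  (the earlier generators live on coordinates where it vanishes).\<close>
lemma span_tail:
  assumes b: "block_seq b" and x: "x \<in> seq_span b"
    and vanish: "\<And>k. k < Min (supp (b i)) \<Longrightarrow> x k = 0"
  shows "x \<in> seq_span (\<lambda>j. b (j + i))"
proof -
  obtain n c where x_def: "x = (\<lambda>k. \<Sum>j<n. c j * b j k)" using x unfolding seq_span_def by blast
  have high: "x k = (\<Sum>j\<in>{i..<n}. c j * b j k)" for k
  proof (cases "k < Min (supp (b i))")
    case True
    have "b j k = 0" if "i \<le> j" for j
      using vanishes_below_Min_supp block_seq_supp[OF b] block_seq_Min_mono[OF b that] True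
      by (meson order_less_le_trans)
    then show ?thesis using vanish[OF True] by (simp add: sum.neutral)
  next
    case False
    have "b j k = 0" if "j < i" for j
      using vanishes_above_Max_supp block_seq_supp[OF b] block_seq_separated[OF b that] False
      by (meson not_less order_less_le_trans)
    then have "(\<Sum>j<n. c j * b j k) = (\<Sum>j\<in>{i..<n}. c j * b j k)"
      by (intro sum.mono_neutral_right) auto
    then show ?thesis by (simp add: x_def)
  qed
  have "(\<Sum>j\<in>{i..<n}. c j * b j k) = (\<Sum>j<n - i. c (j + i) * b (j + i) k)" for k
  proof (cases "i \<le> n")
    case True
    then show ?thesis
      using sum.shift_bounds_nat_ivl[of "\<lambda>j. c j * b j k" 0 i "n - i"] by (simp add: atLeast0LessThan)
  qed simp
  then have "x = (\<lambda>k. \<Sum>j<n - i. c (j + i) * b (j + i) k)" using high by auto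
  then show ?thesis
    unfolding seq_span_def by (intro CollectI exI[of _ "n - i"] exI[of _ "\<lambda>j. c (j + i)"])
qed

section \<open>Almost-containment of block subspaces\<close>

text \<open>If X is contained in span c beyond coordinate N, then every block subspace of X has a
  block subspace inside span c: drop its first N+1 basis vectors.\<close>
lemma block_subspace_almost_inside:
  assumes tail: "tail_sp X N \<subseteq> seq_span c" and Z: "block_subspace Z" and ZX: "Z \<subseteq> X"
  shows "\<exists>Z'. block_subspace Z' \<and> Z' \<subseteq> Z \<and> Z' \<subseteq> seq_span c"
proof -
  obtain z where z: "block_seq z" "Z = seq_span z" using Z unfolding block_subspace_def by blast
  define Z' where "Z' = seq_span (\<lambda>j. z (j + Suc N))"
  have "block_subspace Z'" unfolding Z'_def block_subspace_def using block_seq_shift[OF z(1)] by blast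
  moreover have "Z' \<subseteq> Z" unfolding Z'_def z(2) by (rule span_subset) (rule span_generator)
  moreover have "Z' \<subseteq> seq_span c" unfolding Z'_def
  proof (rule span_subset)
    fix j
    have "z (j + Suc N) \<in> Z" unfolding z(2) by (rule span_generator)
    moreover have "z (j + Suc N) \<noteq> 0" using z(1) unfolding block_seq_def by blast
    moreover have "N < Min (supp (z (j + Suc N)))"
      using block_seq_index_le_Min[OF z(1), of "j + Suc N"] by simp
    ultimately show "z (j + Suc N) \<in> seq_span c" using ZX tail unfolding tail_sp_def by auto
  qed
  ultimately show ?thesis by blast
qed

section \<open>Transferring strategies between subspaces\<close>

text \<open>I answers II's subspace Z by playing
  in a chosen block subspace of Z inside W', and raises every played n to at least N.\<close>
lemma strategy_transfer:
  fixes W W' :: "('f::comm_ring_1) vec set"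
  assumes win: "I_has_strategy T W' v A" and tail: "tail_sp W N \<subseteq> W'"
    and shrink: "\<And>Z. block_subspace Z \<Longrightarrow> Z \<subseteq> W \<Longrightarrow>
                   \<exists>Z'. block_subspace Z' \<and> Z' \<subseteq> Z \<and> Z' \<subseteq> W'"
  shows "I_has_strategy T W v A"
proof -
  obtain \<sigma>' where \<sigma>': "\<forall>\<tau>. (\<forall>k. (\<forall>j<(if even (length v) then Suc k else k). II_legal T W' v \<sigma>' \<tau> j)
        \<longrightarrow> I_legal T v \<sigma>' \<tau> k) \<and> ((\<forall>k. II_legal T W' v \<sigma>' \<tau> k) \<longrightarrow> outcome v \<sigma>' \<tau> \<in> A)"
    using win unfolding I_has_strategy_def by blast
  define g where "g Z = (if block_subspace Z \<and> Z \<subseteq> W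
                         then (SOME Z'. block_subspace Z' \<and> Z' \<subseteq> Z \<and> Z' \<subseteq> W') else Z)" for Z
  have g_legal: "block_subspace (g Z) \<and> g Z \<subseteq> Z \<and> g Z \<subseteq> W'" if "block_subspace Z" "Z \<subseteq> W" for Z
    using someI_ex[OF shrink[OF that]] that unfolding g_def by simp
  have g_sub: "g Z \<subseteq> Z" for Z
    using g_legal[of Z] unfolding g_def by (cases "block_subspace Z \<and> Z \<subseteq> W") auto
  have tail_max: "tail_sp W (max n N) \<subseteq> tail_sp W' n" for n
    using tail unfolding tail_sp_def by auto
  define h where "h = (\<lambda>p::('f vec \<times> 'f vec set). (fst p, g (snd p)))"
  define \<sigma> where "\<sigma> l = (fst (\<sigma>' (map h l)), max (snd (\<sigma>' (map h l))) N)" for l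
  show ?thesis unfolding I_has_strategy_def
  proof (intro exI[of _ \<sigma>] allI)
    fix \<tau> :: "nat \<Rightarrow> 'f vec \<times> 'f vec set"
    define \<tau>' where "\<tau>' = h \<circ> \<tau>"
    have fst_I: "fst (I_move v \<sigma> \<tau> k) = fst (I_move v \<sigma>' \<tau>' k)"
      and snd_I: "snd (I_move v \<sigma> \<tau> k) = max (snd (I_move v \<sigma>' \<tau>' k)) N" for k
      unfolding I_move_def \<sigma>_def \<tau>'_def by simp_all
    have II_moves: "fst (\<tau>' k) = fst (\<tau> k)" "snd (\<tau>' k) = g (snd (\<tau> k))" for k
      unfolding \<tau>'_def h_def by simp_all
    have same_outcome: "outcome v \<sigma> \<tau> = outcome v \<sigma>' \<tau>'"
      unfolding outcome_def by (intro ext) (simp add: fst_I II_moves Let_def)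
    have same_pos: "position v \<sigma> \<tau> m = position v \<sigma>' \<tau>' m" for m
      unfolding position_def same_outcome ..
    have II_legal': "II_legal T W' v \<sigma>' \<tau>' k" if "II_legal T W v \<sigma> \<tau> k" for k
      using that g_legal[of "snd (\<tau> k)"] unfolding II_legal_def same_pos II_moves snd_I
      by auto (use tail_max in blast)+
    have I_legal: "I_legal T v \<sigma> \<tau> k" if "I_legal T v \<sigma>' \<tau>' k" for k
      using that g_sub unfolding I_legal_def same_pos fst_I II_moves by (auto split: if_splits)
    from \<sigma>'[rule_format, of \<tau>'] II_legal' I_legal same_outcome
    show "(\<forall>k. (\<forall>j<(if even (length v) then Suc k else k). II_legal T W v \<sigma> \<tau> j) \<longrightarrow> I_legal T v \<sigma> \<tau> k) \<and>
        ((\<forall>k. II_legal T W v \<sigma> \<tau> k) \<longrightarrow> outcome v \<sigma> \<tau> \<in> A)"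
      by metis
  qed
qed

lemma strategy_mono:
  assumes "I_has_strategy T W' v A" "W \<subseteq> W'"
  shows "I_has_strategy T W v A"
  by (rule strategy_transfer[OF assms(1), of W 0]) (use assms(2) in \<open>auto simp: tail_sp_def\<close>)

lemma strategy_almost_mono:
  assumes "I_has_strategy T (seq_span c) v A" "tail_sp W N \<subseteq> seq_span c"
  shows "I_has_strategy T W v A"
proof (rule strategy_transfer[OF assms])
  show "\<exists>Z'. block_subspace Z' \<and> Z' \<subseteq> Z \<and> Z' \<subseteq> seq_span c"
    if "block_subspace Z" "Z \<subseteq> W" for Z
    using block_subspace_almost_inside[OF assms(2) that] by blast
qed

section \<open>Countability of rules\<close>

text \<open>Over a countable field there are only countably many finitely supported vectors:
  each is determined by the list of its coordinates up to its support's maximum.\<close>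
lemma countable_finitely_supported: "countable {x :: ('f::{zero,countable}) vec. in_E x}"
proof -
  define dec where "dec l = (\<lambda>k. if k < length l then l ! k else (0::'f))" for l
  have "x = dec (map x [0..<Suc (Max (supp x))])" if "in_E x" for x :: "'f vec"
  proof
    fix k
    have "x k = 0" if "\<not> k < Suc (Max (supp x))"
      using vanishes_above_Max_supp[of x k] \<open>in_E x\<close> that by (simp add: in_E_def)
    then show "x k = dec (map x [0..<Suc (Max (supp x))]) k"
      by (cases "k < Suc (Max (supp x))") (simp_all add: dec_def del: upt_Suc)
  qed
  then have "{x :: 'f vec. in_E x} \<subseteq> range dec" by blast
  then show ?thesis by (rule countable_subset) simp
qed

lemma countable_rule: "is_rule V v T \<Longrightarrow> countable (T :: ('f::{comm_ring_1,countable}) vec list set)"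
proof -
  assume "is_rule V v T"
  then have "T \<subseteq> lists {x. in_E x}" by (auto simp: is_rule_def fin_block_def)
  then show ?thesis using countable_lists[OF countable_finitely_supported] countable_subset by blast
qed

section \<open>The fusion construction\<close>

definition winning_refinement :: "('f::comm_ring_1) vec list set \<Rightarrow> (nat \<Rightarrow> 'f vec) set \<Rightarrow>
    'f vec list \<Rightarrow> (nat \<Rightarrow> 'f vec) \<Rightarrow> (nat \<Rightarrow> 'f vec) \<Rightarrow> bool" where
  "winning_refinement T A x b b' \<longleftrightarrow>
     block_seq b' \<and> seq_span b' \<subseteq> seq_span b \<and> I_has_strategy T (seq_span b') x A"

definition refine :: "('f::comm_ring_1) vec list set \<Rightarrow> (nat \<Rightarrow> 'f vec) set \<Rightarrow>
    'f vec list \<Rightarrow> (nat \<Rightarrow> 'f vec) \<Rightarrow> (nat \<Rightarrow> 'f vec)" where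
  "refine T A x b = (if \<exists>b'. winning_refinement T A x b b'
                     then SOME b'. winning_refinement T A x b b' else b)"

primrec refine_seq :: "('f::comm_ring_1) vec list set \<Rightarrow> (nat \<Rightarrow> 'f vec) set \<Rightarrow>
    (nat \<Rightarrow> 'f vec list) \<Rightarrow> (nat \<Rightarrow> 'f vec) \<Rightarrow> nat \<Rightarrow> (nat \<Rightarrow> 'f vec)" where
  "refine_seq T A e b0 0 = b0"
| "refine_seq T A e b0 (Suc i) = refine T A (e i) (refine_seq T A e b0 i)"

lemma refine_winning:
  "\<exists>b'. winning_refinement T A x b b' \<Longrightarrow> winning_refinement T A x b (refine T A x b)"
  using someI_ex[of "winning_refinement T A x b"] by (simp add: refine_def)

lemma refine_block_seq:
  "block_seq b \<Longrightarrow> block_seq (refine T A x b) \<and> seq_span (refine T A x b) \<subseteq> seq_span b"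
proof (cases "\<exists>b'. winning_refinement T A x b b'")
  case True
  then show ?thesis using refine_winning[OF True] by (simp add: winning_refinement_def)
qed (simp add: refine_def)

lemma refine_seq_block_seq:
  "block_seq b0 \<Longrightarrow> block_seq (refine_seq T A e b0 i) \<and>
     seq_span (refine_seq T A e b0 (Suc i)) \<subseteq> seq_span (refine_seq T A e b0 i)"
  by (induction i) (simp_all add: refine_block_seq)

text \<open>If I wins in some block subspace Y almost contained in span b, then I wins in the
  refinement: a block subspace of Y inside span b is a candidate.\<close>
lemma refine_wins:
  assumes tail: "tail_sp X N \<subseteq> seq_span b" and Y: "block_subspace Y" "Y \<subseteq> X"
    and win: "I_has_strategy T Y x A"
  shows "I_has_strategy T (seq_span (refine T A x b)) x A"
proof -
  obtain Z where Z: "block_subspace Z" "Z \<subseteq> Y" "Z \<subseteq> seq_span b"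
    using block_subspace_almost_inside[OF tail Y] by blast
  obtain b' where b': "block_seq b'" "Z = seq_span b'" using Z(1) unfolding block_subspace_def by blast
  have "winning_refinement T A x b b'"
    unfolding winning_refinement_def using b' Z(3) strategy_mono[OF win Z(2)] by simp
  then have "winning_refinement T A x b (refine T A x b)"
    by (intro refine_winning) blast
  then show ?thesis unfolding winning_refinement_def by simp
qed

primrec diagonal :: "(nat \<Rightarrow> nat \<Rightarrow> ('f::zero) vec) \<Rightarrow> nat \<Rightarrow> 'f vec" where
  "diagonal B 0 = B 0 0"
| "diagonal B (Suc i) = B (Suc i) (Suc (Max (supp (diagonal B i))))"

lemma diagonal_from_row: "\<exists>k. diagonal B i = B i k"
  by (cases i) auto

lemma diagonal_fusion:
  fixes B :: "nat \<Rightarrow> nat \<Rightarrow> ('f::comm_ring_1) vec"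
  assumes blk: "\<And>i. block_seq (B i)"
    and dec: "\<And>i. seq_span (B (Suc i)) \<subseteq> seq_span (B i)"
  shows "block_seq (diagonal B)"
    and "seq_span (diagonal B) \<subseteq> seq_span (B 0)"
    and "tail_sp (seq_span (diagonal B)) (Min (supp (diagonal B i))) \<subseteq> seq_span (B i)"
proof -
  show d_blk: "block_seq (diagonal B)"
    unfolding block_seq_def
  proof
    fix n
    obtain k where "diagonal B n = B n k" using diagonal_from_row by blast
    moreover have "Suc (Max (supp (diagonal B n))) \<le> Min (supp (diagonal B (Suc n)))"
      using block_seq_index_le_Min[OF blk[of "Suc n"]] by simp
    ultimately show "in_E (diagonal B n) \<and> diagonal B n \<noteq> 0 \<and>
        Max (supp (diagonal B n)) < Min (supp (diagonal B (Suc n)))"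
      using blk[of n] unfolding block_seq_def by simp
  qed
  have in_row: "diagonal B j \<in> seq_span (B i)" if "i \<le> j" for i j
  proof -
    obtain k where "diagonal B j = B j k" using diagonal_from_row by blast
    then have "diagonal B j \<in> seq_span (B j)" using span_generator by metis
    then show ?thesis using lift_Suc_antimono_le[of "\<lambda>i. seq_span (B i)", OF dec that] by blast
  qed
  show "seq_span (diagonal B) \<subseteq> seq_span (B 0)"
    by (rule span_subset) (simp add: in_row)
  show "tail_sp (seq_span (diagonal B)) (Min (supp (diagonal B i))) \<subseteq> seq_span (B i)"
  proof
    fix x assume x: "x \<in> tail_sp (seq_span (diagonal B)) (Min (supp (diagonal B i)))"
    then have x_span: "x \<in> seq_span (diagonal B)" and x_min: "Min (supp (diagonal B i)) < Min (supp x)"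
      unfolding tail_sp_def by auto
    have "x k = 0" if "k < Min (supp (diagonal B i))" for k
      using vanishes_below_Min_supp[of x k] span_of_block_seq_finite_supp[OF d_blk x_span]
        that x_min by simp
    then have "x \<in> seq_span (\<lambda>j. diagonal B (j + i))"
      by (rule span_tail[OF d_blk x_span])
    also have "\<dots> \<subseteq> seq_span (B i)"
      by (rule span_subset) (simp add: in_row)
    finally show "x \<in> seq_span (B i)" .
  qed
qed

theorem mainTheorem5:
  fixes A :: "(nat \<Rightarrow> nat \<Rightarrow> 'f::{field,countable}) set"
    and V :: "'f vec set" and v :: "'f vec list" and T :: "'f vec list set"
  assumes "block_subspace V" and "fin_block v" and "is_rule V v T"
  shows "\<exists>X. block_subspace X \<and> X \<subseteq> V \<and>
    (\<forall>x\<in>T. (\<exists>Y. block_subspace Y \<and> Y \<subseteq> X \<and> I_has_strategy T Y x A) \<longrightarrow>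
            (\<forall>Y. block_subspace Y \<and> Y \<subseteq> X \<longrightarrow> I_has_strategy T Y x A))"
proof -
  obtain b0 where b0: "block_seq b0" "V = seq_span b0"
    using assms(1) unfolding block_subspace_def by blast
  define e where "e = from_nat_into T"
  define B where "B = refine_seq T A e b0"
  define X where "X = seq_span (diagonal B)"
  have B: "block_seq (B i)" "seq_span (B (Suc i)) \<subseteq> seq_span (B i)" for i
    unfolding B_def using refine_seq_block_seq[OF b0(1)] by blast+
  note fusion = diagonal_fusion[of B, OF B(1) B(2)]
  define N where "N i = Min (supp (diagonal B i))" for i
  have almost: "tail_sp Y (N i) \<subseteq> seq_span (B i)" if "Y \<subseteq> X" for Y i
    using fusion(3)[of i] that unfolding X_def N_def tail_sp_def by blast
  have "I_has_strategy T Y' x A"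
    if "x \<in> T" "block_subspace Y" "Y \<subseteq> X" "I_has_strategy T Y x A" "Y' \<subseteq> X" for x Y Y'
  proof -
    obtain i where x: "e i = x"
      using from_nat_into_surj[OF countable_rule[OF assms(3)] \<open>x \<in> T\<close>] unfolding e_def by blast
    have "B (Suc i) = refine T A x (B i)" unfolding B_def x[symmetric] by simp
    then have "I_has_strategy T (seq_span (B (Suc i))) x A"
      using refine_wins[OF almost[OF order_refl] that(2,3,4)] by simp
    then show ?thesis using strategy_almost_mono[OF _ almost[OF \<open>Y' \<subseteq> X\<close>]] by blast
  qed
  moreover have "block_subspace X" unfolding X_def block_subspace_def using fusion(1) by blast
  moreover have "X \<subseteq> V" unfolding X_def b0(2) using fusion(2) unfolding B_def by simp
  ultimately show ?thesis by blast
qed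

end
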